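(* Given an LDODOSP instance, period counters $(S^d,T^d)_{d\in\{1,\dots,D\}}$ are feasible if and only if they satisfy all of the following: $T^1=0$; for all $1\le d\le D-1$: $S^d\le S^{d+1}$, $T^d\le T^{d+1}$, $T^{d+1}\le S^d$, $S^{d+1}\le T^d+N$; $T^{l_w}=0$ and $S^{D-l_w+1}=S^D$; $T^{d+l_w}\le S^d$ for all $1\le d\le D-l_w$; $S^d\le T^{d+u_w}$ for all $1\le d\le D-u_w$; $S^1=S^{l_o}$ and $T^{D-l_o+1}=T^D$; $S^{d+l_o}-N\le T^d$ for all $1\le d\le D-l_o$; $T^d+N\le S^{d+u_o}$ for all $1\le d\le D-u_o$; $r_l^d\le S^d-T^d\le r_u^d$ for all $1\le d\le D$.
   Context: An instance of the Days On Days Off Scheduling Problem (DODOSP) consists of integers $D\ge 1$ (days), $N\ge 1$ (workers), bounds $l_w,u_w,l_o,u_o,U_w,U_o\in\mathbb{N}$, and for each day $d\in\{1,\dots,D\}$ integers $0\le r_l^d\le r_u^d\le N$. A schedule is a map $f:\{n_1,\dots,n_N\}\times\{1,\dots,D\}\to\{\mathrm{ON},\mathrm{OFF}\}$ (not cyclic). A work period (resp. off period) of a worker is an inclusion-wise maximal set of consecutive days on which the worker is ON (resp. OFF). A schedule is feasible if on every day $d$ the number of workers that are ON lies in $[r_l^d,r_u^d]$, every work period has length between $l_w$ and $u_w$, every off period has length between $l_o$ and $u_o$, every worker is ON on at most $U_w$ days and OFF on at most $U_o$ days. The LDODOSP is the DODOSP restricted to instances with $U_w=U_o=D$. Integers $(S^d,T^d)_{d\in\{1,\dots,D\}}$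 are called period counters if there is some schedule for $N$ workers on $D$ days (not necessarily feasible) such that for each $d$, $S^d$ is the number of work periods (over all workers) whose first day is among days $1,\dots,d$, and $T^d$ is the number of work periods whose last day is among days $1,\dots,d-1$; they then represent that schedule. Period counters are feasible if they represent a feasible schedule of the instance. *)

theory Defs
  imports Main
begin

(* A schedule: f i d = True iff worker i (0 <= i < N, representing n_{i+1}) is ON on day d (1 <= d <= D).
   Values outside these ranges are irrelevant. *)

definition work_period :: "nat \<Rightarrow> (nat \<Rightarrow> nat \<Rightarrow> bool) \<Rightarrow> nat \<Rightarrow> nat \<Rightarrow> nat \<Rightarrow> bool" where
  "work_period D f i a b \<longleftrightarrow> 1 \<le> a \<and> a \<le> b \<and> b \<le> D \<and> (\<forall>d\<in>{a..b}. f i d)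
     \<and> (a = 1 \<or> \<not> f i (a - 1)) \<and> (b = D \<or> \<not> f i (b + 1))"

definition off_period :: "nat \<Rightarrow> (nat \<Rightarrow> nat \<Rightarrow> bool) \<Rightarrow> nat \<Rightarrow> nat \<Rightarrow> nat \<Rightarrow> bool" where
  "off_period D f i a b \<longleftrightarrow> 1 \<le> a \<and> a \<le> b \<and> b \<le> D \<and> (\<forall>d\<in>{a..b}. \<not> f i d)
     \<and> (a = 1 \<or> f i (a - 1)) \<and> (b = D \<or> f i (b + 1))"

definition feasible_schedule ::
  "nat \<Rightarrow> nat \<Rightarrow> nat \<Rightarrow> nat \<Rightarrow> nat \<Rightarrow> nat \<Rightarrow> nat \<Rightarrow> nat \<Rightarrow> (nat \<Rightarrow> nat) \<Rightarrow> (nat \<Rightarrow> nat)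
   \<Rightarrow> (nat \<Rightarrow> nat \<Rightarrow> bool) \<Rightarrow> bool" where
  "feasible_schedule D N lw uw lo uo Uw Uo rl ru f \<longleftrightarrow>
     (\<forall>d\<in>{1..D}. rl d \<le> card {i. i < N \<and> f i d} \<and> card {i. i < N \<and> f i d} \<le> ru d)
   \<and> (\<forall>i<N. \<forall>a b. work_period D f i a b \<longrightarrow> lw \<le> b - a + 1 \<and> b - a + 1 \<le> uw)
   \<and> (\<forall>i<N. \<forall>a b. off_period D f i a b \<longrightarrow> lo \<le> b - a + 1 \<and> b - a + 1 \<le> uo)
   \<and> (\<forall>i<N. card {d\<in>{1..D}. f i d} \<le> Uw \<and> card {d\<in>{1..D}. \<not> f i d} \<le> Uo)"

definition represents :: "nat \<Rightarrow> nat \<Rightarrow> (nat \<Rightarrow> nat \<Rightarrow> bool) \<Rightarrow> (nat \<Rightarrow> int) \<Rightarrow> (nat \<Rightarrow> int) \<Rightarrow> bool" where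
  "represents D N f S T \<longleftrightarrow> (\<forall>d\<in>{1..D}.
      S d = int (card {(i, a, b). i < N \<and> work_period D f i a b \<and> a \<le> d})
    \<and> T d = int (card {(i, a, b). i < N \<and> work_period D f i a b \<and> b < d}))"

definition period_counters :: "nat \<Rightarrow> nat \<Rightarrow> (nat \<Rightarrow> int) \<Rightarrow> (nat \<Rightarrow> int) \<Rightarrow> bool" where
  "period_counters D N S T \<longleftrightarrow> (\<exists>f. represents D N f S T)"

definition feasible_counters ::
  "nat \<Rightarrow> nat \<Rightarrow> nat \<Rightarrow> nat \<Rightarrow> nat \<Rightarrow> nat \<Rightarrow> nat \<Rightarrow> nat \<Rightarrow> (nat \<Rightarrow> nat) \<Rightarrow> (nat \<Rightarrow> nat)
   \<Rightarrow> (nat \<Rightarrow> int) \<Rightarrow> (nat \<Rightarrow> int) \<Rightarrow> bool" where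
  "feasible_counters D N lw uw lo uo Uw Uo rl ru S T \<longleftrightarrow>
     (\<exists>f. feasible_schedule D N lw uw lo uo Uw Uo rl ru f \<and> represents D N f S T)"

end

(*
  For d <= d'
  the difference S^d' - T^d counts the periods meeting the window [d, d'], so every condition is a
  comparison of counts of periods: the bounds on work periods and the conditions at the ends of the
  horizon come from inclusions between such sets of periods, and the conditions involving N from
  the fact that a worker has at most one period meeting two consecutive days, or any window of
  l_o + 1 days (its periods are separated by off periods of length at least l_o), and at least one
  period meeting any window of u_o + 1 days.

  Conversely, number the S^D work periods 0, 1, ... in order of their start: period k starts on
  the first day d with k < S^d and ends on the day before the first day d with k < T^d (on day D
  if there is none), and it is given to worker k mod N. The conditions bound the length of each
  period and the gap between the consecutive periods k and k + N of a worker, as well as the off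
  periods at the ends of the horizon, so this round-robin schedule is feasible; it represents
  (S, T) by construction.
*)

theory Submission
  imports Defs
begin

section \<open>Maximal runs of days\<close>

definition run :: "nat \<Rightarrow> (nat \<Rightarrow> bool) \<Rightarrow> nat \<Rightarrow> nat \<Rightarrow> bool" where
  "run D p a b \<longleftrightarrow> 1 \<le> a \<and> a \<le> b \<and> b \<le> D \<and> (\<forall>d\<in>{a..b}. p d)
     \<and> (a = 1 \<or> \<not> p (a - 1)) \<and> (b = D \<or> \<not> p (b + 1))"

lemma work_period_eq_run: "work_period D f i a b \<longleftrightarrow> run D (f i) a b"
  by (simp add: work_period_def run_def)

lemma off_period_eq_run: "off_period D f i a b \<longleftrightarrow> run D (\<lambda>d. \<not> f i d) a b"
  by (simp add: off_period_def run_def)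

lemma run_end_exists:
  fixes d D :: nat
  assumes "d \<le> D" "p d"
  shows "\<exists>b. d \<le> b \<and> b \<le> D \<and> (\<forall>x\<in>{d..b}. p x) \<and> (b = D \<or> \<not> p (b + 1))"
  using assms
proof (induction d rule: inc_induct)
  case base
  then show ?case by auto
next
  case (step n)
  show ?case
  proof (cases "p (Suc n)")
    case True
    with step.IH obtain b where "Suc n \<le> b" "b \<le> D" "\<forall>x\<in>{Suc n..b}. p x" "b = D \<or> \<not> p (b + 1)"
      by blast
    moreover have "{n..b} = insert n {Suc n..b}" using \<open>Suc n \<le> b\<close> by auto
    ultimately show ?thesis using step.prems by (intro exI[of _ b]) auto
  next
    case False
    with step show ?thesis by (intro exI[of _ n]) auto
  qed
qed

lemma run_start_exists:
  fixes d :: nat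
  assumes "1 \<le> d" "p d"
  shows "\<exists>a. 1 \<le> a \<and> a \<le> d \<and> (\<forall>x\<in>{a..d}. p x) \<and> (a = 1 \<or> \<not> p (a - 1))"
  using assms
proof (induction d rule: dec_induct)
  case base
  then show ?case by auto
next
  case (step n)
  show ?case
  proof (cases "p n")
    case True
    with step.IH obtain a where "1 \<le> a" "a \<le> n" "\<forall>x\<in>{a..n}. p x" "a = 1 \<or> \<not> p (a - 1)"
      by blast
    moreover have "{a..Suc n} = insert (Suc n) {a..n}" using \<open>a \<le> n\<close> by auto
    ultimately show ?thesis using step.prems by (intro exI[of _ a]) auto
  next
    case False
    with step show ?thesis by (intro exI[of _ "Suc n"]) auto
  qed
qed

lemma run_containing:
  assumes "1 \<le> d" "d \<le> D" "p d"
  obtains a b where "run D p a b" "a \<le> d" "d \<le> b"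
proof -
  obtain a where a: "1 \<le> a" "a \<le> d" "\<forall>x\<in>{a..d}. p x" "a = 1 \<or> \<not> p (a - 1)"
    using run_start_exists[of d p] assms by blast
  obtain b where b: "d \<le> b" "b \<le> D" "\<forall>x\<in>{d..b}. p x" "b = D \<or> \<not> p (b + 1)"
    using run_end_exists[of d D p] assms by blast
  have "{a..b} = {a..d} \<union> {d..b}" using a b by auto
  then have "run D p a b" unfolding run_def using a b by auto
  with a b that show ?thesis by blast
qed

lemma run_eq_if_overlap:
  assumes r1: "run D p a1 b1" and r2: "run D p a2 b2" and "a1 \<le> a2" "a2 \<le> b1 + 1"
  shows "a1 = a2 \<and> b1 = b2"
proof -
  have "a1 = a2"
  proof (rule ccontr)
    assume "a1 \<noteq> a2"
    then have "a2 - 1 \<in> {a1..b1}" "a2 \<noteq> 1" using assms unfolding run_def by auto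
    then show False using r1 r2 unfolding run_def by auto
  qed
  moreover have "b1 = b2"
  proof (rule ccontr)
    assume "b1 \<noteq> b2"
    then have "b1 + 1 \<in> {a2..b2} \<or> b2 + 1 \<in> {a1..b1}"
      using \<open>a1 = a2\<close> r1 r2 unfolding run_def by auto
    then show False using r1 r2 unfolding run_def by auto
  qed
  ultimately show ?thesis ..
qed

lemma run_followed_by_complement:
  assumes "run D p a b" "b < D"
  obtains b' where "run D (\<lambda>d. \<not> p d) (b + 1) b'"
proof -
  have "\<not> p (b + 1)" "1 \<le> b + 1" using assms unfolding run_def by auto
  then obtain a' b' where r: "run D (\<lambda>d. \<not> p d) a' b'" "a' \<le> b + 1" "b + 1 \<le> b'"
    using run_containing[of "b + 1" D "\<lambda>d. \<not> p d"] assms(2) by auto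
  have "a' = b + 1"
  proof (rule ccontr)
    assume "a' \<noteq> b + 1"
    then have "b \<in> {a'..b'}" using r by auto
    then have "\<not> p b" using r(1) unfolding run_def by blast
    moreover have "p b" using assms(1) unfolding run_def by auto
    ultimately show False by contradiction
  qed
  then show ?thesis using r that by blast
qed

lemma run_preceded_by_complement:
  assumes "run D p a b" "1 < a"
  obtains a' where "run D (\<lambda>d. \<not> p d) a' (a - 1)"
proof -
  have "1 \<le> a - 1" "a - 1 \<le> D" "\<not> p (a - 1)" using assms unfolding run_def by auto
  then obtain a' b' where r: "run D (\<lambda>d. \<not> p d) a' b'" "a' \<le> a - 1" "a - 1 \<le> b'"
    by (rule run_containing)
  have "b' = a - 1"
  proof (rule ccontr)
    assume "b' \<noteq> a - 1"
    then have "a \<in> {a'..b'}" using r by auto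
    then have "\<not> p a" using r(1) unfolding run_def by blast
    moreover have "p a" using assms(1) unfolding run_def by auto
    ultimately show False by contradiction
  qed
  then show ?thesis using r that by blast
qed

section \<open>Counting work periods\<close>

definition work_periods ::
  "nat \<Rightarrow> nat \<Rightarrow> (nat \<Rightarrow> nat \<Rightarrow> bool) \<Rightarrow> (nat \<Rightarrow> nat \<Rightarrow> bool) \<Rightarrow> (nat \<times> nat \<times> nat) set" where
  "work_periods D N f P = {(i, a, b). i < N \<and> work_period D f i a b \<and> P a b}"

lemma finite_work_periods: "finite (work_periods D N f P)"
  by (rule finite_subset[of _ "{..<N} \<times> {..D} \<times> {..D}"])
    (auto simp: work_periods_def work_period_def)

lemma represents_iff_card_work_periods:
  "represents D N f S T \<longleftrightarrow> (\<forall>d\<in>{1..D}.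
     S d = int (card (work_periods D N f (\<lambda>a b. a \<le> d)))
   \<and> T d = int (card (work_periods D N f (\<lambda>a b. b < d))))"
  by (simp add: represents_def work_periods_def)

lemma card_work_periods_mono:
  assumes "\<And>i a b. i < N \<Longrightarrow> work_period D f i a b \<Longrightarrow> P a b \<Longrightarrow> Q a b"
  shows "card (work_periods D N f P) \<le> card (work_periods D N f Q)"
  by (rule card_mono[OF finite_work_periods]) (auto simp: work_periods_def assms)

lemma card_work_periods_cong:
  assumes "\<And>i a b. i < N \<Longrightarrow> work_period D f i a b \<Longrightarrow> P a b \<longleftrightarrow> Q a b"
  shows "card (work_periods D N f P) = card (work_periods D N f Q)"
  using assms by (intro le_antisym card_work_periods_mono) blast+

lemma card_work_periods_split:
  assumes "d \<le> d'"
  shows "card (work_periods D N f (\<lambda>a b. a \<le> d')) =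
    card (work_periods D N f (\<lambda>a b. b < d)) + card (work_periods D N f (\<lambda>a b. a \<le> d' \<and> d \<le> b))"
proof -
  have "work_periods D N f (\<lambda>a b. a \<le> d') =
      work_periods D N f (\<lambda>a b. b < d) \<union> work_periods D N f (\<lambda>a b. a \<le> d' \<and> d \<le> b)"
    using assms by (auto simp: work_periods_def work_period_def)
  moreover have "work_periods D N f (\<lambda>a b. b < d) \<inter> work_periods D N f (\<lambda>a b. a \<le> d' \<and> d \<le> b) = {}"
    by (auto simp: work_periods_def)
  ultimately show ?thesis by (simp add: card_Un_disjoint finite_work_periods)
qed

lemma inj_on_fst_work_periods:
  assumes "\<And>i a b a' b'. i < N \<Longrightarrow> work_period D f i a b \<Longrightarrow> work_period D f i a' b'
      \<Longrightarrow> P a b \<Longrightarrow> P a' b' \<Longrightarrow> a \<le> a' \<Longrightarrow> a' \<le> b + 1"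
  shows "inj_on fst (work_periods D N f P)"
proof (rule inj_onI)
  fix x y assume "x \<in> work_periods D N f P" "y \<in> work_periods D N f P" "fst x = fst y"
  then obtain i a b a' b' where xy: "x = (i, a, b)" "y = (i, a', b')"
    and h: "i < N" "run D (f i) a b" "run D (f i) a' b'" "P a b" "P a' b'"
    by (auto simp: work_periods_def work_period_eq_run)
  have "a = a' \<and> b = b'"
  proof (cases "a \<le> a'")
    case True
    then show ?thesis
      using assms[of i a b a' b'] h run_eq_if_overlap[OF h(2,3)] by (simp add: work_period_eq_run)
  next
    case False
    then show ?thesis
      using assms[of i a' b' a b] h run_eq_if_overlap[OF h(3,2)] by (simp add: work_period_eq_run)
  qed
  with xy show "x = y" by simp
qed

text \<open>Two distinct work periods of one worker are separated by an off day, so the hypothesis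
  says that each worker has at most one work period satisfying \<open>P\<close>.\<close>

lemma card_work_periods_le_workers:
  assumes "\<And>i a b a' b'. i < N \<Longrightarrow> work_period D f i a b \<Longrightarrow> work_period D f i a' b'
      \<Longrightarrow> P a b \<Longrightarrow> P a' b' \<Longrightarrow> a \<le> a' \<Longrightarrow> a' \<le> b + 1"
  shows "card (work_periods D N f P) \<le> N"
proof -
  have "card (work_periods D N f P) = card (fst ` work_periods D N f P)"
    using card_image[OF inj_on_fst_work_periods[OF assms]] by simp
  also have "\<dots> \<le> card {..<N}"
    by (rule card_mono) (auto simp: work_periods_def)
  finally show ?thesis by simp
qed

lemma card_work_periods_ge_workers:
  assumes "\<And>i. i < N \<Longrightarrow> \<exists>a b. work_period D f i a b \<and> P a b"
  shows "N \<le> card (work_periods D N f P)"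
proof -
  have "{..<N} \<subseteq> fst ` work_periods D N f P"
  proof
    fix i assume "i \<in> {..<N}"
    then obtain a b where "work_period D f i a b" "P a b" using assms by blast
    with \<open>i \<in> {..<N}\<close> have "(i, a, b) \<in> work_periods D N f P" by (simp add: work_periods_def)
    then show "i \<in> fst ` work_periods D N f P" by force
  qed
  then have "card {..<N} \<le> card (fst ` work_periods D N f P)"
    by (intro card_mono finite_imageI finite_work_periods)
  also have "\<dots> \<le> card (work_periods D N f P)"
    by (rule card_image_le[OF finite_work_periods])
  finally show ?thesis by simp
qed

lemma card_on_duty:
  assumes "1 \<le> d" "d \<le> D"
  shows "card {i. i < N \<and> f i d} = card (work_periods D N f (\<lambda>a b. a \<le> d \<and> d \<le> b))"
proof -
  have "{i. i < N \<and> f i d} = fst ` work_periods D N f (\<lambda>a b. a \<le> d \<and> d \<le> b)"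
  proof
    show "{i. i < N \<and> f i d} \<subseteq> fst ` work_periods D N f (\<lambda>a b. a \<le> d \<and> d \<le> b)"
    proof
      fix i assume "i \<in> {i. i < N \<and> f i d}"
      then obtain a b where "i < N" "run D (f i) a b" "a \<le> d" "d \<le> b"
        using run_containing[of d D "f i"] assms by auto
      then have "(i, a, b) \<in> work_periods D N f (\<lambda>a b. a \<le> d \<and> d \<le> b)"
        by (simp add: work_periods_def work_period_eq_run)
      then show "i \<in> fst ` work_periods D N f (\<lambda>a b. a \<le> d \<and> d \<le> b)" by force
    qed
  qed (fastforce simp: work_periods_def work_period_def)
  moreover have "inj_on fst (work_periods D N f (\<lambda>a b. a \<le> d \<and> d \<le> b))"
    by (rule inj_on_fst_work_periods) simp
  ultimately show ?thesis by (simp add: card_image)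
qed

lemma off_period_same_start: "off_period D f i a b \<Longrightarrow> off_period D f i a b' \<Longrightarrow> b = b'"
  using run_eq_if_overlap[of D "\<lambda>d. \<not> f i d" a b a b'] by (simp add: off_period_eq_run run_def)

lemma work_period_followed_by_off:
  assumes "work_period D f i a b" "b < D"
    and "\<And>a' b'. off_period D f i a' b' \<Longrightarrow> lo \<le> b' - a' + 1"
  shows "b + lo \<le> D" "\<And>x. b < x \<Longrightarrow> x \<le> b + lo \<Longrightarrow> \<not> f i x"
proof -
  obtain b' where "run D (\<lambda>d. \<not> f i d) (b + 1) b'"
    using run_followed_by_complement assms(1,2) unfolding work_period_eq_run by blast
  moreover from this have "lo \<le> b' - (b + 1) + 1" by (rule assms(3)[unfolded off_period_eq_run])
  ultimately show "b + lo \<le> D" "\<And>x. b < x \<Longrightarrow> x \<le> b + lo \<Longrightarrow> \<not> f i x"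
    unfolding run_def by auto
qed

lemma work_period_preceded_by_off:
  assumes "work_period D f i a b" "1 < a"
    and "\<And>a' b'. off_period D f i a' b' \<Longrightarrow> lo \<le> b' - a' + 1"
  shows "lo < a"
proof -
  obtain a' where "run D (\<lambda>d. \<not> f i d) a' (a - 1)"
    using run_preceded_by_complement assms(1,2) unfolding work_period_eq_run by blast
  moreover from this have "lo \<le> (a - 1) - a' + 1" by (rule assms(3)[unfolded off_period_eq_run])
  ultimately show ?thesis unfolding run_def by auto
qed

lemma on_duty_within_max_off:
  assumes "\<And>a' b'. off_period D f i a' b' \<Longrightarrow> b' - a' + 1 \<le> uo"
    and "1 \<le> d" "d + uo \<le> D"
  obtains e where "d \<le> e" "e \<le> d + uo" "f i e"
proof (cases "f i d")
  case False
  then obtain a' b' where off: "run D (\<lambda>x. \<not> f i x) a' b'" "a' \<le> d" "d \<le> b'"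
    using run_containing[of d D "\<lambda>x. \<not> f i x"] assms(2,3) by auto
  then have "b' - a' + 1 \<le> uo" using assms(1) by (simp add: off_period_eq_run)
  then have "b' < d + uo" "b' \<noteq> D" using off assms(3) unfolding run_def by auto
  then show ?thesis using off that[of "b' + 1"] unfolding run_def by auto
qed (use that[of d] in simp)

section \<open>Counters of a schedule\<close>

lemma feasible_scheduleD:
  assumes "feasible_schedule D N lw uw lo uo Uw Uo rl ru f"
  shows "\<And>d. d \<in> {1..D} \<Longrightarrow> rl d \<le> card {i. i < N \<and> f i d} \<and> card {i. i < N \<and> f i d} \<le> ru d"
    and "\<And>i a b. i < N \<Longrightarrow> work_period D f i a b \<Longrightarrow> lw \<le> b - a + 1"
    and "\<And>i a b. i < N \<Longrightarrow> work_period D f i a b \<Longrightarrow> b - a + 1 \<le> uw"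
    and "\<And>i a b. i < N \<Longrightarrow> off_period D f i a b \<Longrightarrow> lo \<le> b - a + 1"
    and "\<And>i a b. i < N \<Longrightarrow> off_period D f i a b \<Longrightarrow> b - a + 1 \<le> uo"
  using assms unfolding feasible_schedule_def by blast+

locale represented_schedule =
  fixes D N :: nat and f :: "nat \<Rightarrow> nat \<Rightarrow> bool" and S T :: "nat \<Rightarrow> int"
  assumes represents: "represents D N f S T"
begin

lemma S_eq: "1 \<le> d \<Longrightarrow> d \<le> D \<Longrightarrow> S d = int (card (work_periods D N f (\<lambda>a b. a \<le> d)))"
  using represents by (simp add: represents_iff_card_work_periods)

lemma T_eq: "1 \<le> d \<Longrightarrow> d \<le> D \<Longrightarrow> T d = int (card (work_periods D N f (\<lambda>a b. b < d)))"
  using represents by (simp add: represents_iff_card_work_periods)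

lemma S_eq_T_plus_overlapping:
  assumes "1 \<le> d" "d \<le> d'" "d' \<le> D"
  shows "S d' = T d + int (card (work_periods D N f (\<lambda>a b. a \<le> d' \<and> d \<le> b)))"
  using assms card_work_periods_split[OF assms(2)] by (simp add: S_eq T_eq)

lemma S_minus_T_eq_on_duty:
  assumes "1 \<le> d" "d \<le> D"
  shows "S d - T d = int (card {i. i < N \<and> f i d})"
  using S_eq_T_plus_overlapping[of d d] card_on_duty[OF assms] assms by simp

lemma T_1_eq_0:
  assumes "1 \<le> D"
  shows "T 1 = 0"
proof -
  have "work_periods D N f (\<lambda>a b. b < 1) = {}" by (auto simp: work_periods_def work_period_def)
  then show ?thesis using T_eq assms by simp
qed

lemma counter_step:
  assumes "1 \<le> d" "d < D"
  shows "S d \<le> S (d + 1)" "T d \<le> T (d + 1)" "T (d + 1) \<le> S d" "S (d + 1) \<le> T d + int N"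
proof -
  show "S d \<le> S (d + 1)"
    using assms by (simp add: S_eq) (rule card_work_periods_mono; simp)
  show "T d \<le> T (d + 1)"
    using assms by (simp add: T_eq) (rule card_work_periods_mono; simp)
  show "T (d + 1) \<le> S d"
    using assms by (simp add: S_eq T_eq) (rule card_work_periods_mono; simp add: work_period_def)
  have "card (work_periods D N f (\<lambda>a b. a \<le> d + 1 \<and> d \<le> b)) \<le> N"
    by (rule card_work_periods_le_workers) simp
  then show "S (d + 1) \<le> T d + int N"
    using S_eq_T_plus_overlapping[of d "d + 1"] assms by simp
qed

context
  fixes lw :: nat
  assumes work_min: "\<And>i a b. i < N \<Longrightarrow> work_period D f i a b \<Longrightarrow> lw \<le> b - a + 1"
begin

lemma T_lw_eq_0:
  assumes "1 \<le> lw" "lw \<le> D"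
  shows "T lw = 0"
proof -
  have "\<not> b < lw" if "i < N" "work_period D f i a b" for i a b
  proof -
    have "1 \<le> a" "a \<le> b" using that(2) by (simp_all add: work_period_def)
    then show ?thesis using work_min[OF that] by linarith
  qed
  then have "work_periods D N f (\<lambda>a b. b < lw) = {}" by (auto simp: work_periods_def)
  then show ?thesis using T_eq assms by simp
qed

lemma S_D_minus_lw_eq_S_D:
  assumes "1 \<le> lw" "lw \<le> D"
  shows "S (D - lw + 1) = S D"
proof -
  have "a \<le> D - lw + 1 \<longleftrightarrow> a \<le> D" if "i < N" "work_period D f i a b" for i a b
  proof -
    have "a \<le> b" "b \<le> D" using that(2) by (simp_all add: work_period_def)
    then show ?thesis using work_min[OF that] assms by linarith
  qed
  then have "card (work_periods D N f (\<lambda>a b. a \<le> D - lw + 1))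
      = card (work_periods D N f (\<lambda>a b. a \<le> D))"
    by (rule card_work_periods_cong)
  then show ?thesis using assms by (simp add: S_eq)
qed

lemma T_plus_lw_le_S:
  assumes "1 \<le> d" "d + lw \<le> D"
  shows "T (d + lw) \<le> S d"
proof -
  have "a \<le> d" if "i < N" "work_period D f i a b" "b < d + lw" for i a b
  proof -
    have "a \<le> b" using that(2) by (simp add: work_period_def)
    then show ?thesis using work_min[OF that(1,2)] that(3) by linarith
  qed
  then have "card (work_periods D N f (\<lambda>a b. b < d + lw)) \<le> card (work_periods D N f (\<lambda>a b. a \<le> d))"
    by (rule card_work_periods_mono)
  then show ?thesis using assms by (simp add: S_eq T_eq)
qed

end

context
  fixes uw :: nat
  assumes work_max: "\<And>i a b. i < N \<Longrightarrow> work_period D f i a b \<Longrightarrow> b - a + 1 \<le> uw"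
begin

lemma S_le_T_plus_uw:
  assumes "1 \<le> d" "d + uw \<le> D"
  shows "S d \<le> T (d + uw)"
proof -
  have "b < d + uw" if "i < N" "work_period D f i a b" "a \<le> d" for i a b
  proof -
    have "a \<le> b" using that(2) by (simp add: work_period_def)
    then show ?thesis using work_max[OF that(1,2)] that(3) by linarith
  qed
  then have "card (work_periods D N f (\<lambda>a b. a \<le> d)) \<le> card (work_periods D N f (\<lambda>a b. b < d + uw))"
    by (rule card_work_periods_mono)
  then show ?thesis using assms by (simp add: S_eq T_eq)
qed

end

context
  fixes lo :: nat
  assumes off_min: "\<And>i a b. i < N \<Longrightarrow> off_period D f i a b \<Longrightarrow> lo \<le> b - a + 1"
begin

lemma S_1_eq_S_lo:
  assumes "1 \<le> lo" "lo \<le> D"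
  shows "S 1 = S lo"
proof -
  have "a \<le> 1 \<longleftrightarrow> a \<le> lo" if "i < N" "work_period D f i a b" for i a b
  proof -
    have "1 \<le> a" using that(2) by (simp add: work_period_def)
    moreover have "lo < a" if "1 < a"
      using work_period_preceded_by_off[OF \<open>work_period D f i a b\<close> that] off_min \<open>i < N\<close> by blast
    ultimately show ?thesis using assms(1) by linarith
  qed
  then have "card (work_periods D N f (\<lambda>a b. a \<le> 1)) = card (work_periods D N f (\<lambda>a b. a \<le> lo))"
    by (rule card_work_periods_cong)
  then show ?thesis using assms by (simp add: S_eq)
qed

lemma T_D_minus_lo_eq_T_D:
  assumes "1 \<le> lo" "lo \<le> D"
  shows "T (D - lo + 1) = T D"
proof -
  have "b < D - lo + 1 \<longleftrightarrow> b < D" if "i < N" "work_period D f i a b" for i a b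
  proof -
    have "b + lo \<le> D" if "b < D"
      using work_period_followed_by_off(1)[OF \<open>work_period D f i a b\<close> that] off_min \<open>i < N\<close> by blast
    then show ?thesis using assms by linarith
  qed
  then have "card (work_periods D N f (\<lambda>a b. b < D - lo + 1))
      = card (work_periods D N f (\<lambda>a b. b < D))"
    by (rule card_work_periods_cong)
  then show ?thesis using assms by (simp add: T_eq)
qed

lemma S_plus_lo_minus_N_le_T:
  assumes "1 \<le> d" "d + lo \<le> D"
  shows "S (d + lo) - int N \<le> T d"
proof -
  have "a' \<le> b + 1"
    if "i < N" "work_period D f i a b" "work_period D f i a' b'"
      "a \<le> d + lo \<and> d \<le> b" "a' \<le> d + lo \<and> d \<le> b'" "a \<le> a'" for i a b a' b'
  proof (rule ccontr)
    assume "\<not> a' \<le> b + 1"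
    moreover have "f i a'" "a' \<le> D" using that(3) by (auto simp: work_period_def)
    moreover have "\<And>x. b < x \<Longrightarrow> x \<le> b + lo \<Longrightarrow> \<not> f i x"
      using work_period_followed_by_off(2)[OF that(2)] off_min \<open>i < N\<close> calculation by force
    ultimately show False using that(4,5) by force
  qed
  then have "card (work_periods D N f (\<lambda>a b. a \<le> d + lo \<and> d \<le> b)) \<le> N"
    by (rule card_work_periods_le_workers)
  then show ?thesis using S_eq_T_plus_overlapping[of d "d + lo"] assms by simp
qed

end

context
  fixes uo :: nat
  assumes off_max: "\<And>i a b. i < N \<Longrightarrow> off_period D f i a b \<Longrightarrow> b - a + 1 \<le> uo"
begin

lemma T_plus_N_le_S_plus_uo:
  assumes "1 \<le> d" "d + uo \<le> D"
  shows "T d + int N \<le> S (d + uo)"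
proof -
  have "\<exists>a b. work_period D f i a b \<and> a \<le> d + uo \<and> d \<le> b" if i: "i < N" for i
  proof -
    obtain e where e: "d \<le> e" "e \<le> d + uo" "f i e"
      using on_duty_within_max_off[OF off_max[OF i] assms] by blast
    then obtain a b where "run D (f i) a b" "a \<le> e" "e \<le> b"
      using run_containing[of e D "f i"] assms by auto
    with e show ?thesis unfolding work_period_eq_run by (intro exI[of _ a] exI[of _ b]) simp
  qed
  then have "N \<le> card (work_periods D N f (\<lambda>a b. a \<le> d + uo \<and> d \<le> b))"
    by (rule card_work_periods_ge_workers)
  then show ?thesis using S_eq_T_plus_overlapping[of d "d + uo"] assms by simp
qed

end

end

section \<open>A round-robin schedule realising the counters\<close>

lemma stepwise_mono_le:
  fixes F :: "nat \<Rightarrow> 'a::order"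
  assumes step: "\<And>d. l \<le> d \<Longrightarrow> d < h \<Longrightarrow> F d \<le> F (Suc d)"
    and "l \<le> x" "x \<le> y" "y \<le> h"
  shows "F x \<le> F y"
  using \<open>x \<le> y\<close> \<open>y \<le> h\<close>
proof (induction y rule: dec_induct)
  case (step n)
  then have "F x \<le> F n" by simp
  also have "F n \<le> F (Suc n)" using step assms(2) by (intro assms(1)) simp_all
  finally show ?case .
qed simp

lemma mod_eq_less_imp_add_le:
  fixes k k' N :: nat
  assumes "k < k'" "k mod N = k' mod N"
  shows "k + N \<le> k'"
proof -
  have "N dvd k' - k" using assms mod_eq_dvd_iff_nat[of k k' N] by simp
  then have "N \<le> k' - k" using assms(1) by (intro dvd_imp_le) simp_all
  then show ?thesis using assms(1) by simp
qed

locale counter_conditions =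
  fixes D N lw uw lo uo :: nat and S T :: "nat \<Rightarrow> int"
  assumes D_pos: "1 \<le> D" and N_pos: "1 \<le> N"
    and lw_pos: "1 \<le> lw" and lw_le_D: "lw \<le> D" and lo_pos: "1 \<le> lo" and lo_le_D: "lo \<le> D"
    and T_1: "T 1 = 0"
    and S_step: "\<And>d. 1 \<le> d \<Longrightarrow> d < D \<Longrightarrow> S d \<le> S (d + 1)"
    and T_step: "\<And>d. 1 \<le> d \<Longrightarrow> d < D \<Longrightarrow> T d \<le> T (d + 1)"
    and S_step_le_T: "\<And>d. 1 \<le> d \<Longrightarrow> d < D \<Longrightarrow> S (d + 1) \<le> T d + int N"
    and T_lw: "T lw = 0" and S_D_minus_lw: "S (D - lw + 1) = S D"
    and T_plus_lw_le_S: "\<And>d. 1 \<le> d \<Longrightarrow> d + lw \<le> D \<Longrightarrow> T (d + lw) \<le> S d"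
    and S_le_T_plus_uw: "\<And>d. 1 \<le> d \<Longrightarrow> d + uw \<le> D \<Longrightarrow> S d \<le> T (d + uw)"
    and S_lo: "S 1 = S lo" and T_D_minus_lo: "T (D - lo + 1) = T D"
    and S_plus_lo_minus_N_le_T: "\<And>d. 1 \<le> d \<Longrightarrow> d + lo \<le> D \<Longrightarrow> S (d + lo) - int N \<le> T d"
    and T_plus_N_le_S_plus_uo: "\<And>d. 1 \<le> d \<Longrightarrow> d + uo \<le> D \<Longrightarrow> T d + int N \<le> S (d + uo)"
    and T_le_S: "\<And>d. 1 \<le> d \<Longrightarrow> d \<le> D \<Longrightarrow> T d \<le> S d"
    and S_1_le_N: "S 1 \<le> int N"
begin

lemma S_mono: "1 \<le> x \<Longrightarrow> x \<le> y \<Longrightarrow> y \<le> D \<Longrightarrow> S x \<le> S y"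
  using stepwise_mono_le[of 1 D S] S_step by simp

lemma T_mono: "1 \<le> x \<Longrightarrow> x \<le> y \<Longrightarrow> y \<le> D \<Longrightarrow> T x \<le> T y"
  using stepwise_mono_le[of 1 D T] T_step by simp

lemma T_nonneg: "1 \<le> d \<Longrightarrow> d \<le> D \<Longrightarrow> 0 \<le> T d"
  using T_mono[of 1 d] T_1 by simp

definition num_periods :: nat where
  "num_periods = nat (S D)"

lemma int_num_periods: "int num_periods = S D"
  unfolding num_periods_def using T_nonneg[of D] T_le_S[of D] D_pos by simp

lemma S_le_num_periods: "1 \<le> d \<Longrightarrow> d \<le> D \<Longrightarrow> S d \<le> int num_periods"
  using S_mono[of d D] int_num_periods by simp

definition start_day :: "nat \<Rightarrow> nat" where
  "start_day k = (LEAST d. 1 \<le> d \<and> int k < S d)"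

definition end_day :: "nat \<Rightarrow> nat" where
  "end_day k = (LEAST d. 1 \<le> d \<and> (D \<le> d \<or> int k < T (d + 1)))"

lemma start_day_bounds:
  assumes "k < num_periods"
  shows "1 \<le> start_day k" "start_day k \<le> D"
proof -
  have D: "1 \<le> D \<and> int k < S D" using D_pos assms int_num_periods by simp
  show "1 \<le> start_day k"
    using LeastI[of "\<lambda>d. 1 \<le> d \<and> int k < S d", OF D] unfolding start_day_def by simp
  show "start_day k \<le> D"
    unfolding start_day_def by (rule Least_le[of "\<lambda>d. 1 \<le> d \<and> int k < S d", OF D])
qed

lemma start_day_le_iff:
  assumes "k < num_periods" "1 \<le> d" "d \<le> D"
  shows "start_day k \<le> d \<longleftrightarrow> int k < S d"
proof
  have D: "1 \<le> D \<and> int k < S D" using D_pos assms(1) int_num_periods by simp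
  have "int k < S (start_day k)"
    using LeastI[of "\<lambda>d. 1 \<le> d \<and> int k < S d", OF D] unfolding start_day_def by simp
  then show "start_day k \<le> d \<Longrightarrow> int k < S d"
    using S_mono[of "start_day k" d] start_day_bounds[OF assms(1)] assms by force
next
  show "int k < S d \<Longrightarrow> start_day k \<le> d"
    unfolding start_day_def using assms by (intro Least_le) simp
qed

lemma end_day_bounds: "1 \<le> end_day k" "end_day k \<le> D"
proof -
  have D: "1 \<le> D \<and> (D \<le> D \<or> int k < T (D + 1))" using D_pos by simp
  show "1 \<le> end_day k"
    using LeastI[of "\<lambda>d. 1 \<le> d \<and> (D \<le> d \<or> int k < T (d + 1))", OF D]
    unfolding end_day_def by simp
  show "end_day k \<le> D"
    unfolding end_day_def by (rule Least_le[of "\<lambda>d. 1 \<le> d \<and> (D \<le> d \<or> int k < T (d + 1))", OF D])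
qed

lemma end_day_less_iff:
  assumes "1 \<le> d" "d \<le> D"
  shows "end_day k < d \<longleftrightarrow> int k < T d"
proof
  assume less: "end_day k < d"
  have D: "1 \<le> D \<and> (D \<le> D \<or> int k < T (D + 1))" using D_pos by simp
  have "D \<le> end_day k \<or> int k < T (end_day k + 1)"
    using LeastI[of "\<lambda>d. 1 \<le> d \<and> (D \<le> d \<or> int k < T (d + 1))", OF D]
    unfolding end_day_def by simp
  then have "int k < T (end_day k + 1)" using less assms by linarith
  also have "\<dots> \<le> T d" using T_mono[of "end_day k + 1" d] less assms by simp
  finally show "int k < T d" .
next
  assume less: "int k < T d"
  then have "d \<noteq> 1" using T_1 by auto
  then have "1 \<le> d - 1 \<and> (D \<le> d - 1 \<or> int k < T (d - 1 + 1))" using assms less by simp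
  then have "end_day k \<le> d - 1" unfolding end_day_def by (rule Least_le)
  then show "end_day k < d" using \<open>d \<noteq> 1\<close> assms by simp
qed

lemma start_day_mono: "k \<le> k' \<Longrightarrow> k' < num_periods \<Longrightarrow> start_day k \<le> start_day k'"
  using start_day_le_iff[of k' "start_day k'"] start_day_le_iff[of k "start_day k'"]
    start_day_bounds[of k'] by simp

lemma end_day_mono:
  assumes "k \<le> k'"
  shows "end_day k \<le> end_day k'"
proof (cases "end_day k' < D")
  case True
  then have "int k' < T (end_day k' + 1)"
    using end_day_less_iff[of "end_day k' + 1" k'] end_day_bounds by simp
  then have "end_day k < end_day k' + 1"
    using end_day_less_iff[of "end_day k' + 1" k] True assms end_day_bounds by simp
  then show ?thesis by simp
qed (use end_day_bounds[of k] in simp)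

lemma less_S_start_day: "k < num_periods \<Longrightarrow> int k < S (start_day k)"
  using start_day_le_iff[of k "start_day k"] start_day_bounds[of k] by simp

lemma less_T_after_end_day: "end_day k < D \<Longrightarrow> int k < T (end_day k + 1)"
  using end_day_less_iff[of "end_day k + 1" k] end_day_bounds[of k] by simp

lemma not_less_T_end_day: "\<not> int k < T (end_day k)"
  using end_day_less_iff[of "end_day k" k] end_day_bounds[of k] by simp

lemma start_day_plus_lw_le:
  assumes "k < num_periods"
  shows "start_day k + lw \<le> end_day k + 1"
proof (cases "end_day k < D")
  case False
  have "int k < S (D - lw + 1)" using S_D_minus_lw int_num_periods assms by simp
  then have "start_day k \<le> D - lw + 1" using start_day_le_iff assms lw_le_D lw_pos by simp
  then show ?thesis using False end_day_bounds[of k] lw_le_D by simp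
next
  case True
  then have less: "int k < T (end_day k + 1)" by (rule less_T_after_end_day)
  show ?thesis
  proof (cases "end_day k + 1 \<le> lw")
    case True
    then have "T (end_day k + 1) \<le> 0" using T_mono[of "end_day k + 1" lw] T_lw lw_le_D by simp
    then show ?thesis using less by simp
  next
    case False
    define d where "d = end_day k + 1 - lw"
    have d: "1 \<le> d" "d + lw = end_day k + 1" "d + lw \<le> D"
      using False True unfolding d_def by auto
    then have "int k < S d" using less T_plus_lw_le_S[of d] by simp
    then have "start_day k \<le> d" using start_day_le_iff assms d by simp
    then show ?thesis using d by simp
  qed
qed

lemma start_day_le_end_day: "k < num_periods \<Longrightarrow> start_day k \<le> end_day k"
  using start_day_plus_lw_le[of k] lw_pos by simp

lemma end_day_less_start_day_plus_uw:
  assumes "k < num_periods"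
  shows "end_day k < start_day k + uw"
proof (cases "start_day k + uw \<le> D")
  case True
  have "int k < S (start_day k)" using less_S_start_day[OF assms] .
  also have "\<dots> \<le> T (start_day k + uw)" using S_le_T_plus_uw True start_day_bounds[OF assms] by simp
  finally show ?thesis using end_day_less_iff True start_day_bounds[OF assms] by simp
qed (use end_day_bounds[of k] in simp)

lemma end_day_plus_lo_le_D:
  assumes "end_day k < D"
  shows "end_day k + lo \<le> D"
proof (rule ccontr)
  assume "\<not> end_day k + lo \<le> D"
  then have "T (D - lo + 1) \<le> T (end_day k)"
    using T_mono[of "D - lo + 1" "end_day k"] lo_le_D end_day_bounds[of k] by simp
  moreover have "T (end_day k + 1) \<le> T D" using T_mono[of "end_day k + 1" D] assms by simp
  ultimately show False
    using T_D_minus_lo less_T_after_end_day[OF assms] not_less_T_end_day[of k] by simp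
qed

lemma gap_to_next_period:
  assumes "k + N < num_periods"
  shows "end_day k < D" "end_day k + lo + 1 \<le> start_day (k + N)"
    "start_day (k + N) \<le> end_day k + uo + 1"
proof -
  let ?s = "start_day (k + N)"
  have s: "1 \<le> ?s" "?s \<le> D" "int (k + N) < S ?s"
    using start_day_bounds[OF assms] start_day_le_iff[OF assms] by auto
  then have "?s \<noteq> 1" using S_1_le_N by auto
  then have "S ?s \<le> T (?s - 1) + int N" using S_step_le_T[of "?s - 1"] s by simp
  then have "int k < T (?s - 1)" using s by simp
  then have before: "end_day k < ?s - 1" using end_day_less_iff[of "?s - 1" k] \<open>?s \<noteq> 1\<close> s by simp
  then show end_before_D: "end_day k < D" using s by simp
  have k_ended: "int k < T (end_day k + 1)" "\<not> int k < T (end_day k)"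
    using less_T_after_end_day[OF end_before_D] not_less_T_end_day by simp_all
  have lo_room: "end_day k + lo \<le> D" using end_day_plus_lo_le_D[OF end_before_D] .
  show "end_day k + lo + 1 \<le> ?s"
  proof (rule ccontr)
    assume "\<not> end_day k + lo + 1 \<le> ?s"
    then have "S ?s \<le> S (end_day k + lo)" using S_mono[of ?s "end_day k + lo"] s lo_room by simp
    also have "\<dots> \<le> T (end_day k) + int N"
      using S_plus_lo_minus_N_le_T[of "end_day k"] lo_room end_day_bounds by simp
    finally show False using s k_ended by simp
  qed
  show "?s \<le> end_day k + uo + 1"
  proof (cases "end_day k + 1 + uo \<le> D")
    case True
    then have "int (k + N) < S (end_day k + 1 + uo)"
      using T_plus_N_le_S_plus_uo[of "end_day k + 1"] k_ended by simp
    then show ?thesis using start_day_le_iff[OF assms] True by simp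
  qed (use s in simp)
qed

lemma same_worker_separated:
  assumes "k < k'" "k' < num_periods" "k mod N = k' mod N"
  shows "end_day k + lo + 1 \<le> start_day k'"
proof -
  have "k + N \<le> k'" using mod_eq_less_imp_add_le assms by blast
  then show ?thesis
    using gap_to_next_period(2)[of k] start_day_mono[of "k + N" k'] assms(2) by simp
qed

lemma first_period_start:
  assumes "i < N" "i < num_periods"
  shows "1 < start_day i \<Longrightarrow> lo < start_day i" "start_day i \<le> uo + 1"
proof -
  assume "1 < start_day i"
  then have "\<not> int i < S lo" using start_day_le_iff[OF assms(2), of 1] D_pos S_lo by simp
  then show "lo < start_day i" using start_day_le_iff[OF assms(2), of lo] lo_pos lo_le_D by simp
next
  show "start_day i \<le> uo + 1"
  proof (cases "uo + 1 \<le> D")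
    case True
    then have "int i < S (uo + 1)" using T_plus_N_le_S_plus_uo[of 1] T_1 assms by simp
    then show ?thesis using start_day_le_iff[OF assms(2)] True by simp
  qed (use start_day_bounds[OF assms(2)] in simp)
qed

lemma idle_worker: "num_periods \<le> i \<Longrightarrow> i < N \<Longrightarrow> D \<le> uo"
  using T_plus_N_le_S_plus_uo[of 1] S_mono[of "uo + 1" D] int_num_periods T_1 by force

lemma last_period_end:
  assumes "k < num_periods" "num_periods \<le> k + N"
  shows "D \<le> end_day k + uo"
proof (rule ccontr)
  assume "\<not> D \<le> end_day k + uo"
  then have "int k + int N < S (end_day k + 1 + uo)"
    using T_plus_N_le_S_plus_uo[of "end_day k + 1"] end_day_less_iff[of "end_day k + 1" k]
    by (simp add: add.commute)
  also have "\<dots> \<le> S D" using S_mono \<open>\<not> D \<le> end_day k + uo\<close> by simp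
  finally show False using int_num_periods assms by simp
qed

definition round_robin :: "nat \<Rightarrow> nat \<Rightarrow> bool" where
  "round_robin i x \<longleftrightarrow> (\<exists>k<num_periods. k mod N = i \<and> start_day k \<le> x \<and> x \<le> end_day k)"

lemma round_robin_on_period:
  "k < num_periods \<Longrightarrow> start_day k \<le> x \<Longrightarrow> x \<le> end_day k \<Longrightarrow> round_robin (k mod N) x"
  unfolding round_robin_def by blast

lemma round_robin_off_before_first:
  assumes "i < N" "i < num_periods \<Longrightarrow> x < start_day i"
  shows "\<not> round_robin i x"
proof
  assume "round_robin i x"
  then obtain k where k: "k < num_periods" "k mod N = i" "start_day k \<le> x"
    unfolding round_robin_def by blast
  then have "i \<le> k" by (metis mod_less_eq_dividend)
  then show False using k assms(2) start_day_mono[of i k] by simp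
qed

lemma round_robin_off_after:
  assumes "k < num_periods" "end_day k < x" "k + N < num_periods \<Longrightarrow> x < start_day (k + N)"
  shows "\<not> round_robin (k mod N) x"
proof
  assume "round_robin (k mod N) x"
  then obtain k' where k': "k' < num_periods" "k' mod N = k mod N"
      "start_day k' \<le> x" "x \<le> end_day k'"
    unfolding round_robin_def by blast
  show False
  proof (cases "k' \<le> k")
    case True
    then show False using end_day_mono[of k' k] k' assms(2) by simp
  next
    case False
    then have "k + N \<le> k'" using mod_eq_less_imp_add_le k' by simp
    then show False using start_day_mono[of "k + N" k'] k' assms(3) by simp
  qed
qed

lemma work_period_of_period:
  assumes "k < num_periods"
  shows "work_period D round_robin (k mod N) (start_day k) (end_day k)"
proof -
  have "\<not> round_robin (k mod N) (start_day k - 1)" if "1 < start_day k"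
  proof (cases "k < N")
    case True
    then show ?thesis using round_robin_off_before_first[of k] that by simp
  next
    case False
    then have "k - N + N = k" "(k - N) mod N = k mod N" by (simp_all add: mod_if)
    moreover have "end_day (k - N) + lo + 1 \<le> start_day k"
      using gap_to_next_period(2)[of "k - N"] assms calculation(1) by simp
    ultimately show ?thesis
      using round_robin_off_after[of "k - N" "start_day k - 1"] assms lo_pos by simp
  qed
  moreover have "\<not> round_robin (k mod N) (end_day k + 1)"
  proof (rule round_robin_off_after[OF assms])
    assume "k + N < num_periods"
    then show "end_day k + 1 < start_day (k + N)" using gap_to_next_period(2) lo_pos by fastforce
  qed simp
  ultimately show ?thesis
    unfolding work_period_def
    using round_robin_on_period[OF assms] start_day_bounds[OF assms] end_day_bounds[of k]
      start_day_le_end_day[OF assms] by fastforce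
qed

lemma work_period_round_robin_iff:
  assumes "i < N"
  shows "work_period D round_robin i a b \<longleftrightarrow>
    (\<exists>k<num_periods. k mod N = i \<and> a = start_day k \<and> b = end_day k)"
proof
  assume wp: "work_period D round_robin i a b"
  then have "round_robin i a" by (simp add: work_period_def)
  then obtain k where k: "k < num_periods" "k mod N = i" "start_day k \<le> a" "a \<le> end_day k"
    unfolding round_robin_def by blast
  then have "start_day k = a \<and> end_day k = b"
    using run_eq_if_overlap work_period_of_period[OF k(1)] wp by (simp add: work_period_eq_run)
  with k show "\<exists>k<num_periods. k mod N = i \<and> a = start_day k \<and> b = end_day k" by auto
qed (auto simp: work_period_of_period)

lemma inj_on_period_triple: "inj_on (\<lambda>k. (k mod N, start_day k, end_day k)) {..<num_periods}"
proof (rule linorder_inj_onI')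
  fix k k' assume "k \<in> {..<num_periods}" "k' \<in> {..<num_periods}" "k < k'"
  then show "(k mod N, start_day k, end_day k) \<noteq> (k' mod N, start_day k', end_day k')"
    using same_worker_separated[of k k'] start_day_le_end_day[of k] by auto
qed

lemma card_work_periods_round_robin:
  "card (work_periods D N round_robin P) = card {k. k < num_periods \<and> P (start_day k) (end_day k)}"
proof -
  have "work_periods D N round_robin P =
      (\<lambda>k. (k mod N, start_day k, end_day k)) ` {k. k < num_periods \<and> P (start_day k) (end_day k)}"
    using N_pos by (auto simp: work_periods_def work_period_round_robin_iff)
  moreover have "inj_on (\<lambda>k. (k mod N, start_day k, end_day k))
      {k. k < num_periods \<and> P (start_day k) (end_day k)}"
    by (rule inj_on_subset[OF inj_on_period_triple]) auto
  ultimately show ?thesis by (simp add: card_image)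
qed

lemma represents_round_robin: "represents D N round_robin S T"
  unfolding represents_iff_card_work_periods card_work_periods_round_robin
proof
  fix d assume "d \<in> {1..D}"
  then have d: "1 \<le> d" "d \<le> D" by auto
  have bounds: "0 \<le> T d" "T d \<le> S d" "S d \<le> int num_periods"
    using T_nonneg T_le_S S_le_num_periods d by simp_all
  have "{k. k < num_periods \<and> start_day k \<le> d} = {..<nat (S d)}"
    using start_day_le_iff d bounds by force
  moreover have "{k. k < num_periods \<and> end_day k < d} = {..<nat (T d)}"
    using end_day_less_iff d bounds by force
  ultimately show "S d = int (card {k. k < num_periods \<and> start_day k \<le> d})
      \<and> T d = int (card {k. k < num_periods \<and> end_day k < d})"
    using bounds by simp
qed

lemma round_robin_work_lengths:
  assumes "i < N" "work_period D round_robin i a b"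
  shows "lw \<le> b - a + 1" "b - a + 1 \<le> uw"
proof -
  obtain k where "k < num_periods" "a = start_day k" "b = end_day k"
    using assms work_period_round_robin_iff by blast
  then show "lw \<le> b - a + 1" "b - a + 1 \<le> uw"
    using start_day_plus_lw_le[of k] end_day_less_start_day_plus_uw[of k] start_day_le_end_day[of k]
    by simp_all
qed

lemma off_period_between_periods:
  assumes "k + N < num_periods"
  shows "off_period D round_robin (k mod N) (end_day k + 1) (start_day (k + N) - 1)"
proof -
  have k: "k < num_periods" using assms by simp
  have gap: "end_day k + lo + 1 \<le> start_day (k + N)" by (rule gap_to_next_period(2)[OF assms])
  have "round_robin (k mod N) (end_day k)" "round_robin (k mod N) (start_day (k + N))"
    using round_robin_on_period[OF k] round_robin_on_period[OF assms] start_day_le_end_day[OF k]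
      start_day_le_end_day[OF assms] by auto
  moreover have "\<not> round_robin (k mod N) x" if "end_day k < x" "x < start_day (k + N)" for x
    using round_robin_off_after[OF k that(1)] that(2) by simp
  ultimately show ?thesis
    unfolding off_period_def using gap lo_pos start_day_bounds[OF assms] by auto
qed

lemma off_period_after_last:
  assumes "k < num_periods" "num_periods \<le> k + N" "end_day k < D"
  shows "off_period D round_robin (k mod N) (end_day k + 1) D"
proof -
  have "round_robin (k mod N) (end_day k)"
    using round_robin_on_period[OF assms(1)] start_day_le_end_day[OF assms(1)] by simp
  moreover have "\<not> round_robin (k mod N) x" if "end_day k < x" for x
    using round_robin_off_after[OF assms(1) that] assms(2) by simp
  ultimately show ?thesis unfolding off_period_def using assms(3) by auto
qed

lemma off_period_before_first:
  assumes "i < N" "i < num_periods" "1 < start_day i"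
  shows "off_period D round_robin i 1 (start_day i - 1)"
proof -
  have "round_robin i (start_day i)"
    using round_robin_on_period[OF assms(2)] start_day_le_end_day[OF assms(2)] assms(1) by simp
  moreover have "\<not> round_robin i x" if "x < start_day i" for x
    using round_robin_off_before_first[OF assms(1)] that by simp
  ultimately show ?thesis
    unfolding off_period_def using assms(3) start_day_bounds[OF assms(2)] by auto
qed

lemma off_period_idle:
  assumes "i < N" "num_periods \<le> i"
  shows "off_period D round_robin i 1 D"
  unfolding off_period_def using round_robin_off_before_first[OF assms(1)] assms(2) D_pos by auto

lemma off_period_from_first_day:
  assumes "i < N" "off_period D round_robin i 1 b"
  obtains (idle) "num_periods \<le> i" "b = D"
  | (first) "i < num_periods" "1 < start_day i" "b = start_day i - 1"
proof (cases "i < num_periods")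
  case True
  have "round_robin i (start_day i)"
    using round_robin_on_period[OF True] start_day_le_end_day[OF True] assms(1) by simp
  moreover have "\<not> round_robin i 1" using assms(2) by (simp add: off_period_def)
  ultimately have "1 < start_day i"
    using start_day_bounds(1)[OF True] by (cases "start_day i = 1") auto
  moreover from this have "b = start_day i - 1"
    using off_period_same_start assms(2) off_period_before_first[OF assms(1) True] by blast
  ultimately show ?thesis using first True by blast
next
  case False
  then show ?thesis using idle off_period_same_start assms(2) off_period_idle[OF assms(1)] by simp
qed

lemma off_period_after_work:
  assumes "i < N" "off_period D round_robin i a b" "1 < a"
  obtains (between) k where "k + N < num_periods" "k mod N = i"
      "a = end_day k + 1" "b = start_day (k + N) - 1"
  | (last) k where "k < num_periods" "num_periods \<le> k + N" "k mod N = i" "end_day k < D"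
      "a = end_day k + 1" "b = D"
proof -
  have "run D (\<lambda>d. \<not> round_robin i d) a b" using assms(2) by (simp add: off_period_eq_run)
  then obtain a' where "run D (\<lambda>d. \<not> \<not> round_robin i d) a' (a - 1)"
    using run_preceded_by_complement assms(3) by blast
  then have "work_period D round_robin i a' (a - 1)" by (simp add: work_period_eq_run)
  then obtain k where k: "k < num_periods" "k mod N = i" "end_day k + 1 = a"
    using work_period_round_robin_iff[OF assms(1)] assms(3) by auto
  have "end_day k < D" using k(3) assms(2) by (simp add: off_period_def)
  show ?thesis
  proof (cases "k + N < num_periods")
    case True
    then have "b = start_day (k + N) - 1"
      using off_period_same_start assms(2) off_period_between_periods k by blast
    then show ?thesis using between k True by simp
  next
    case False
    then have "off_period D round_robin i a D"
      using off_period_after_last[OF k(1) _ \<open>end_day k < D\<close>] k(2,3) by simp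
    then have "b = D" using off_period_same_start assms(2) by blast
    then show ?thesis using last k \<open>end_day k < D\<close> False by simp
  qed
qed

lemma round_robin_off_lengths:
  assumes "i < N" "off_period D round_robin i a b"
  shows "lo \<le> b - a + 1 \<and> b - a + 1 \<le> uo"
proof (cases "a = 1")
  case True
  from assms(1) assms(2)[unfolded True] show ?thesis
  proof (cases rule: off_period_from_first_day)
    case idle
    then show ?thesis using True lo_le_D idle_worker assms(1) D_pos by simp
  next
    case first
    then show ?thesis using True first_period_start[OF assms(1)] by arith
  qed
next
  case False
  then have "1 < a" using assms(2) by (simp add: off_period_def)
  with assms show ?thesis
  proof (cases rule: off_period_after_work)
    case (between k)
    then show ?thesis using gap_to_next_period[of k] lo_pos by arith
  next
    case (last k)
    then show ?thesis using end_day_plus_lo_le_D[of k] last_period_end[of k] by arith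
  qed
qed

lemma feasible_counters_round_robin:
  assumes "\<And>d. 1 \<le> d \<Longrightarrow> d \<le> D \<Longrightarrow> int (rl d) \<le> S d - T d \<and> S d - T d \<le> int (ru d)"
  shows "feasible_counters D N lw uw lo uo D D rl ru S T"
proof -
  interpret represented_schedule D N round_robin S T
    by (rule represented_schedule.intro, rule represents_round_robin)
  have "card {d \<in> {1..D}. P d} \<le> card {1..D}" for P :: "nat \<Rightarrow> bool"
    by (rule card_mono) auto
  then have "feasible_schedule D N lw uw lo uo D D rl ru round_robin"
    unfolding feasible_schedule_def
    using assms S_minus_T_eq_on_duty round_robin_work_lengths round_robin_off_lengths by auto
  then show ?thesis unfolding feasible_counters_def using represents_round_robin by blast
qed

end

theorem corollary5p10:
  fixes D N lw uw lo uo :: nat and rl ru :: "nat \<Rightarrow> nat" and S T :: "nat \<Rightarrow> int"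
  assumes "D \<ge> 1" and "N \<ge> 1"
    and "\<forall>d\<in>{1..D}. rl d \<le> ru d \<and> ru d \<le> N"
    and "1 \<le> lw" and "lw \<le> D" and "1 \<le> lo" and "lo \<le> D"
    and "period_counters D N S T"
  shows "feasible_counters D N lw uw lo uo D D rl ru S T \<longleftrightarrow>
     (T 1 = 0
      \<and> (\<forall>d. 1 \<le> d \<and> d \<le> D - 1 \<longrightarrow>
            S d \<le> S (d + 1) \<and> T d \<le> T (d + 1) \<and> T (d + 1) \<le> S d \<and> S (d + 1) \<le> T d + int N)
      \<and> T lw = 0 \<and> S (D - lw + 1) = S D
      \<and> (\<forall>d. 1 \<le> d \<and> d + lw \<le> D \<longrightarrow> T (d + lw) \<le> S d)
      \<and> (\<forall>d. 1 \<le> d \<and> d + uw \<le> D \<longrightarrow> S d \<le> T (d + uw))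
      \<and> S 1 = S lo \<and> T (D - lo + 1) = T D
      \<and> (\<forall>d. 1 \<le> d \<and> d + lo \<le> D \<longrightarrow> S (d + lo) - int N \<le> T d)
      \<and> (\<forall>d. 1 \<le> d \<and> d + uo \<le> D \<longrightarrow> T d + int N \<le> S (d + uo))
      \<and> (\<forall>d. 1 \<le> d \<and> d \<le> D \<longrightarrow> int (rl d) \<le> S d - T d \<and> S d - T d \<le> int (ru d)))"
  (is "?feasible \<longleftrightarrow> ?conditions")
proof
  assume ?feasible
  then obtain f where schedule: "feasible_schedule D N lw uw lo uo D D rl ru f"
    and "represents D N f S T"
    unfolding feasible_counters_def by blast
  then interpret represented_schedule D N f S T by unfold_locales
  note lengths = feasible_scheduleD(2-5)[OF schedule]
  have "\<forall>d. 1 \<le> d \<and> d \<le> D - 1 \<longrightarrow>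
      S d \<le> S (d + 1) \<and> T d \<le> T (d + 1) \<and> T (d + 1) \<le> S d \<and> S (d + 1) \<le> T d + int N"
    using counter_step assms(1) by (simp add: le_diff_conv2)
  moreover have "\<forall>d. 1 \<le> d \<and> d \<le> D \<longrightarrow> int (rl d) \<le> S d - T d \<and> S d - T d \<le> int (ru d)"
    using S_minus_T_eq_on_duty feasible_scheduleD(1)[OF schedule] by simp
  moreover have "T lw = 0" using lengths(1) assms(4,5) by (rule T_lw_eq_0)
  moreover have "S (D - lw + 1) = S D" using lengths(1) assms(4,5) by (rule S_D_minus_lw_eq_S_D)
  moreover have "\<forall>d. 1 \<le> d \<and> d + lw \<le> D \<longrightarrow> T (d + lw) \<le> S d"
    using lengths(1) by (auto intro: T_plus_lw_le_S)
  moreover have "\<forall>d. 1 \<le> d \<and> d + uw \<le> D \<longrightarrow> S d \<le> T (d + uw)"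
    using lengths(2) by (auto intro: S_le_T_plus_uw)
  moreover have "S 1 = S lo" using lengths(3) assms(6,7) by (rule S_1_eq_S_lo)
  moreover have "T (D - lo + 1) = T D" using lengths(3) assms(6,7) by (rule T_D_minus_lo_eq_T_D)
  moreover have "\<forall>d. 1 \<le> d \<and> d + lo \<le> D \<longrightarrow> S (d + lo) - int N \<le> T d"
    using lengths(3) by (auto intro: S_plus_lo_minus_N_le_T)
  moreover have "\<forall>d. 1 \<le> d \<and> d + uo \<le> D \<longrightarrow> T d + int N \<le> S (d + uo)"
    using lengths(4) by (auto intro: T_plus_N_le_S_plus_uo)
  ultimately show ?conditions using T_1_eq_0[OF assms(1)] by blast
next
  assume conditions: ?conditions
  then have on_duty: "\<And>d. 1 \<le> d \<Longrightarrow> d \<le> D \<Longrightarrow> int (rl d) \<le> S d - T d \<and> S d - T d \<le> int (ru d)"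
    by blast
  have "T d \<le> S d" if "1 \<le> d" "d \<le> D" for d using on_duty[OF that] by linarith
  moreover have "S 1 \<le> int N"
    using on_duty[of 1] assms(1) bspec[OF assms(3), of 1] conditions[THEN conjunct1] by simp
  ultimately interpret counter_conditions D N lw uw lo uo S T
    using conditions assms by unfold_locales (simp_all add: le_diff_conv2)
  show ?feasible using on_duty by (rule feasible_counters_round_robin)
qed

end
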